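(* Let $\Lambda$ be a finite set of $N_s\ge2$ sites, let $t>0$ and $\lambda_x>0$ for each $x\in\Lambda$, and consider the Hubbard model with hopping matrix $t_{x,y}=t\lambda_x\lambda_y$ (for all $x,y\in\Lambda$, including $x=y$) and electron number $N_e=N_s-1$. Then for any $U>0$ the ground states of $H$ in $\mathcal H_{N_e}$ have total spin $S_{\rm tot}=S_{\max}=N_e/2$ and are nondegenerate apart from the trivial $(2S_{\max}+1)$-fold degeneracy, i.e. the ground-state eigenspace has dimension exactly $2S_{\max}+1$ and every ground state has $S_{\rm tot}=S_{\max}$.
   Context: For $x\in\Lambda$, $\sigma\in\{\uparrow,\downarrow\}$, $c_{x,\sigma}$ are fermion annihilation operators with $\{c^\dagger_{x,\sigma},c_{y,\tau}\}=\delta_{x,y}\delta_{\sigma,\tau}$, $\{c_{x,\sigma},c_{y,\tau}\}=\{c^\dagger_{x,\sigma},c^\dagger_{y,\tau}\}=0$, vacuum $\Phi_{\rm vac}$ with $c_{x,\sigma}\Phi_{\rm vac}=0$; $\mathcal H_{N_e}$ is the span of $c^\dagger_{x_1,\sigma_1}\cdots c^\dagger_{x_{N_e},\sigma_{N_e}}\Phi_{\rm vac}$. $n_{x,\sigma}=c^\dagger_{x,\sigma}c_{x,\sigma}$. The Hubbard Hamiltonian is $H=\sum_{x,y\in\Lambda}\sum_\sigma t_{x,y}c^\dagger_{x,\sigma}c_{y,\sigma}+U\sum_x n_{x,\uparrow}n_{x,\downarrow}$ on $\mathcal H_{N_e}$. Total spin operators $S^{(\alpha)}_{\rm tot}=\frac12\sum_x\sum_{\sigma,\tau}c^\dagger_{x,\sigma}(p^{(\alpha)})_{\sigma,\tau}c_{x,\tau}$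 (Pauli matrices $p^{(\alpha)}$); a state has total spin $S_{\rm tot}$ if $\sum_\alpha(S^{(\alpha)}_{\rm tot})^2$ acts as $S_{\rm tot}(S_{\rm tot}+1)$; $S_{\max}=N_e/2$ for $N_e\le N_s$. *)

theory Defs
  imports Complex_Main "HOL-Library.Function_Algebras"
begin

text \<open>A mode is a pair (x, sigma) with x a site and
  sigma :: bool the spin (True = up, False = down).  A state is a
  complex-valued function on finite sets of modes: psi S is the coefficient
  of the basis vector  c^dag_{m_1} ... c^dag_{m_k} Phi_vac,  where
  S = {m_1,...,m_k} and m_1 < ... < m_k in the fixed mode ordering midx.\<close>

type_synonym mode = "nat \<times> bool"
type_synonym fvec = "mode set \<Rightarrow> complex"

definition midx :: "mode \<Rightarrow> nat" where
  "midx m = 2 * fst m + (if snd m then 0 else 1)"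

definition fsign :: "mode set \<Rightarrow> mode \<Rightarrow> complex" where
  "fsign S m = (-1) ^ card {m' \<in> S. midx m' < midx m}"

definition ann :: "mode \<Rightarrow> fvec \<Rightarrow> fvec" where
  "ann m \<psi> = (\<lambda>S. if m \<notin> S then fsign S m * \<psi> (insert m S) else 0)"

definition cre :: "mode \<Rightarrow> fvec \<Rightarrow> fvec" where
  "cre m \<psi> = (\<lambda>S. if m \<in> S then fsign S m * \<psi> (S - {m}) else 0)"

definition num :: "mode \<Rightarrow> fvec \<Rightarrow> fvec" where
  "num m \<psi> = cre m (ann m \<psi>)"

definition Hspace :: "nat \<Rightarrow> nat \<Rightarrow> fvec set" where
  "Hspace Ns Ne = {\<psi>. \<forall>S. \<psi> S \<noteq> 0 \<longrightarrow> S \<subseteq> {..<Ns} \<times> UNIV \<and> card S = Ne}"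

definition hubbardH :: "nat \<Rightarrow> (nat \<Rightarrow> nat \<Rightarrow> real) \<Rightarrow> real \<Rightarrow> fvec \<Rightarrow> fvec" where
  "hubbardH Ns tt U \<psi> = (\<lambda>S.
     (\<Sum>x<Ns. \<Sum>y<Ns. \<Sum>\<sigma>\<in>UNIV. complex_of_real (tt x y) * cre (x,\<sigma>) (ann (y,\<sigma>) \<psi>) S)
     + complex_of_real U * (\<Sum>x<Ns. num (x,True) (num (x,False) \<psi>) S))"

text \<open>Pauli matrices p^(1), p^(2), p^(3); row/column index True = up, False = down.\<close>
definition pauli :: "nat \<Rightarrow> bool \<Rightarrow> bool \<Rightarrow> complex" where
  "pauli a \<sigma> \<tau> =
     (if a = 1 then (if \<sigma> \<noteq> \<tau> then 1 else 0)
      else if a = 2 then (if \<sigma> = \<tau> then 0 else if \<sigma> then - \<i> else \<i>)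
      else (if \<sigma> \<noteq> \<tau> then 0 else if \<sigma> then 1 else -1))"

definition Stot :: "nat \<Rightarrow> nat \<Rightarrow> fvec \<Rightarrow> fvec" where
  "Stot Ns a \<psi> = (\<lambda>S. (1/2) * (\<Sum>x<Ns. \<Sum>\<sigma>\<in>UNIV. \<Sum>\<tau>\<in>UNIV.
                         pauli a \<sigma> \<tau> * cre (x,\<sigma>) (ann (x,\<tau>) \<psi>) S))"

definition Stot2 :: "nat \<Rightarrow> fvec \<Rightarrow> fvec" where
  "Stot2 Ns \<psi> = (\<lambda>S. \<Sum>a\<in>{1,2,3}. Stot Ns a (Stot Ns a \<psi>) S)"

definition hasTotalSpin :: "nat \<Rightarrow> real \<Rightarrow> fvec \<Rightarrow> bool" where
  "hasTotalSpin Ns s \<psi> \<longleftrightarrow> Stot2 Ns \<psi> = (\<lambda>S. complex_of_real (s * (s + 1)) * \<psi> S)"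

text \<open>Ground-state energy: the lowest eigenvalue of H on H_{N_e}
  (H is Hermitian, so all eigenvalues are real).\<close>
definition groundEnergy :: "nat \<Rightarrow> (nat \<Rightarrow> nat \<Rightarrow> real) \<Rightarrow> real \<Rightarrow> nat \<Rightarrow> real" where
  "groundEnergy Ns tt U Ne = Inf {E. \<exists>\<psi>\<in>Hspace Ns Ne. (\<exists>S. \<psi> S \<noteq> 0) \<and>
        hubbardH Ns tt U \<psi> = (\<lambda>S. complex_of_real E * \<psi> S)}"

definition groundSpace :: "nat \<Rightarrow> (nat \<Rightarrow> nat \<Rightarrow> real) \<Rightarrow> real \<Rightarrow> nat \<Rightarrow> fvec set" where
  "groundSpace Ns tt U Ne = {\<psi>\<in>Hspace Ns Ne.
        hubbardH Ns tt U \<psi> = (\<lambda>S. complex_of_real (groundEnergy Ns tt U Ne) * \<psi> S)}"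

definition cdim :: "fvec set \<Rightarrow> nat" where
  "cdim V = vector_space.dim (\<lambda>c (\<psi>::fvec). (\<lambda>S. c * \<psi> S)) V"

end

theory Submission
  imports Defs
begin

(* The hopping matrix t lam_x lam_y has rank one, so with A_s = sum_y lam_y c_{y,s} the
   Hamiltonian is H = t sum_s A_s^* A_s + U sum_x n_{x,up} n_{x,down}, a sum of positive
   semidefinite terms. Hence no eigenvalue is negative, and a state has energy 0 iff both A_s
   annihilate it and no site is doubly occupied. With N_s - 1 electrons such a state lives on
   configurations with one hole at h and spins s on the other sites, and A_s psi = 0 says that
   letting the electron at y hop into the hole multiplies the amplitude by (-1)^(h+y) lam_y / lam_h.
   Three such moves exchange two spins, so psi(h, s) / ((-1)^h lam_h) depends only on the number
   of up spins; conversely all these states have energy 0. The ground space is therefore spanned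
   by N_s states, one for each number of up spins, and on them the total spin operators act as in
   the irreducible representation of spin N_e / 2. *)

section \<open>Fermion operators\<close>

lemma midx_less: "midx (y,b) < midx (x,c) \<longleftrightarrow> y < x \<or> (y = x \<and> b \<and> \<not> c)"
  by (auto simp: midx_def split: if_splits)

lemma fsign_insert_self: "fsign (insert m S) m = fsign S m"
  unfolding fsign_def by (rule arg_cong[where f="\<lambda>S. (-1) ^ card S"]) auto

lemma cre_ann_same_site:
  "cre (x,\<sigma>) (ann (x,\<tau>) \<psi>) S =
    (if (x,\<sigma>) \<in> S \<and> (x,\<tau>) \<notin> S - {(x,\<sigma>)} then \<psi> (insert (x,\<tau>) (S - {(x,\<sigma>)})) else 0)"
proof (cases "(x,\<sigma>) \<in> S \<and> (x,\<tau>) \<notin> S - {(x,\<sigma>)}")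
  case True
  \<comment> \<open>no mode of site x lies strictly between (x,\<sigma>) and (x,\<tau>), so the two signs agree\<close>
  have "midx m < midx (x,\<sigma>) \<longleftrightarrow> m \<noteq> (x,\<sigma>) \<and> midx m < midx (x,\<tau>)" if "m \<in> S" for m
    using that True by (cases m; cases \<sigma>; cases \<tau>) (auto simp: midx_less)
  then have "{m\<in>S. midx m < midx (x,\<sigma>)} = {m\<in>S - {(x,\<sigma>)}. midx m < midx (x,\<tau>)}"
    by blast
  then have "fsign S (x,\<sigma>) * fsign (S - {(x,\<sigma>)}) (x,\<tau>) = 1"
    unfolding fsign_def by (simp flip: power_add mult_2)
  then show ?thesis
    using True by (simp add: cre_def ann_def mult.assoc[symmetric])
next
  case False
  then consider "(x,\<sigma>) \<notin> S" | "(x,\<tau>) \<in> S - {(x,\<sigma>)}"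
    by blast
  then show ?thesis
    by cases (auto simp: cre_def ann_def)
qed

lemma num_apply: "num m \<psi> S = (if m \<in> S then \<psi> S else 0)"
  by (cases m) (auto simp: num_def cre_ann_same_site insert_absorb)

lemma cre_zero: "cre m (\<lambda>_. 0) = (\<lambda>_. 0)"
  by (simp add: cre_def fun_eq_iff)

lemma cre_sum: "cre m (\<lambda>S. \<Sum>i\<in>I. f i * \<phi> i S) S = (\<Sum>i\<in>I. f i * cre m (\<phi> i) S)"
  unfolding cre_def by (auto simp: sum_distrib_left algebra_simps)

definition fock_inner :: "mode set \<Rightarrow> fvec \<Rightarrow> fvec \<Rightarrow> complex" where
  "fock_inner M \<phi> \<chi> = (\<Sum>S\<in>Pow M. cnj (\<phi> S) * \<chi> S)"

definition fock_sqnorm :: "mode set \<Rightarrow> fvec \<Rightarrow> real" where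
  "fock_sqnorm M \<psi> = (\<Sum>S\<in>Pow M. (cmod (\<psi> S))\<^sup>2)"

lemma fock_inner_self: "fock_inner M \<psi> \<psi> = of_real (fock_sqnorm M \<psi>)"
  unfolding fock_inner_def fock_sqnorm_def of_real_sum
  by (intro sum.cong refl) (simp only: complex_norm_square mult.commute)

lemma fock_sqnorm_nonneg: "fock_sqnorm M \<psi> \<ge> 0"
  unfolding fock_sqnorm_def by (intro sum_nonneg) auto

lemma fock_sqnorm_eq_0_iff:
  "finite M \<Longrightarrow> fock_sqnorm M \<psi> = 0 \<longleftrightarrow> (\<forall>S\<subseteq>M. \<psi> S = 0)"
  unfolding fock_sqnorm_def by (subst sum_nonneg_eq_0_iff) auto

lemma cre_adjoint_ann:
  assumes "m \<in> M" "finite M"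
  shows "fock_inner M \<phi> (cre m \<chi>) = fock_inner M (ann m \<phi>) \<chi>"
proof -
  have fin: "finite (Pow M)" using assms by simp
  have bij: "bij_betw (insert m) {S\<in>Pow M. m \<notin> S} {S\<in>Pow M. m \<in> S}"
    by (rule bij_betw_byWitness[where f'="\<lambda>S. S - {m}"]) (use assms in auto)
  have "fock_inner M \<phi> (cre m \<chi>) = (\<Sum>S\<in>Pow M. if m \<in> S then cnj (\<phi> S) * fsign S m * \<chi> (S - {m}) else 0)"
    unfolding fock_inner_def cre_def by (intro sum.cong) auto
  also have "\<dots> = (\<Sum>S\<in>{S\<in>Pow M. m \<in> S}. cnj (\<phi> S) * fsign S m * \<chi> (S - {m}))"
    by (rule sum.inter_filter[OF fin, symmetric])
  also have "\<dots> = (\<Sum>S\<in>{S\<in>Pow M. m \<notin> S}. cnj (\<phi> (insert m S)) * fsign S m * \<chi> S)"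
    by (subst sum.reindex_bij_betw[OF bij, symmetric]) (auto intro!: sum.cong simp: fsign_insert_self)
  also have "\<dots> = (\<Sum>S\<in>Pow M. if m \<notin> S then cnj (\<phi> (insert m S)) * fsign S m * \<chi> S else 0)"
    by (rule sum.inter_filter[OF fin])
  also have "\<dots> = fock_inner M (ann m \<phi>) \<chi>"
    unfolding fock_inner_def ann_def by (intro sum.cong) (auto simp: fsign_def)
  finally show ?thesis .
qed

lemma fock_inner_sum_left:
  "fock_inner M (\<lambda>S. \<Sum>i\<in>I. \<phi> i S) \<chi> = (\<Sum>i\<in>I. fock_inner M (\<phi> i) \<chi>)"
  unfolding fock_inner_def by (simp add: sum_distrib_right sum.swap[of _ I])

lemma fock_inner_sum_right:
  "fock_inner M \<phi> (\<lambda>S. \<Sum>i\<in>I. \<chi> i S) = (\<Sum>i\<in>I. fock_inner M \<phi> (\<chi> i))"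
  unfolding fock_inner_def by (simp add: sum_distrib_left sum.swap[of _ I])

lemma fock_inner_scale_left: "fock_inner M (\<lambda>S. c * \<phi> S) \<chi> = cnj c * fock_inner M \<phi> \<chi>"
  unfolding fock_inner_def by (simp add: sum_distrib_left mult.assoc)

lemma fock_inner_scale_right: "fock_inner M \<phi> (\<lambda>S. c * \<chi> S) = c * fock_inner M \<phi> \<chi>"
  unfolding fock_inner_def by (simp add: sum_distrib_left mult.left_commute)

lemma fock_inner_add_right:
  "fock_inner M \<phi> (\<lambda>S. \<chi> S + \<chi>' S) = fock_inner M \<phi> \<chi> + fock_inner M \<phi> \<chi>'"
  unfolding fock_inner_def by (simp add: distrib_left sum.distrib)

section \<open>The Hamiltonian with rank-one hopping as a sum of squares\<close>

abbreviation modes :: "nat \<Rightarrow> mode set" where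
  "modes Ns \<equiv> {..<Ns} \<times> UNIV"

definition weighted_ann :: "nat \<Rightarrow> (nat \<Rightarrow> real) \<Rightarrow> bool \<Rightarrow> fvec \<Rightarrow> fvec" where
  "weighted_ann Ns lam \<sigma> \<psi> S = (\<Sum>y<Ns. of_real (lam y) * ann (y,\<sigma>) \<psi> S)"

abbreviation double_occ :: "nat \<Rightarrow> fvec \<Rightarrow> fvec" where
  "double_occ x \<psi> \<equiv> num (x,True) (num (x,False) \<psi>)"

definition no_double_occupancy :: "fvec \<Rightarrow> bool" where
  "no_double_occupancy \<psi> \<longleftrightarrow> (\<forall>S x. (x,True) \<in> S \<and> (x,False) \<in> S \<longrightarrow> \<psi> S = 0)"

lemma double_occ_apply: "double_occ x \<psi> S = (if (x,True) \<in> S \<and> (x,False) \<in> S then \<psi> S else 0)"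
  by (simp add: num_apply)

lemma hubbardH_rank_one:
  "hubbardH Ns (\<lambda>x y. t * lam x * lam y) U \<psi> = (\<lambda>S.
     (\<Sum>\<sigma>\<in>UNIV. \<Sum>x<Ns. of_real (t * lam x) * cre (x,\<sigma>) (weighted_ann Ns lam \<sigma> \<psi>) S)
     + of_real U * (\<Sum>x<Ns. double_occ x \<psi> S))"
proof (rule ext)
  fix S
  have "(\<Sum>y<Ns. \<Sum>\<sigma>\<in>UNIV. of_real (t * lam x * lam y) * cre (x,\<sigma>) (ann (y,\<sigma>) \<psi>) S)
      = (\<Sum>\<sigma>\<in>UNIV. of_real (t * lam x) * cre (x,\<sigma>) (weighted_ann Ns lam \<sigma> \<psi>) S)" for x
  proof -
    have "(\<Sum>y<Ns. \<Sum>\<sigma>\<in>UNIV. of_real (t * lam x * lam y) * cre (x,\<sigma>) (ann (y,\<sigma>) \<psi>) S)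
        = (\<Sum>\<sigma>\<in>UNIV. \<Sum>y<Ns. of_real (t * lam x) * (of_real (lam y) * cre (x,\<sigma>) (ann (y,\<sigma>) \<psi>) S))"
      by (subst sum.swap) (simp add: mult_ac)
    also have "\<dots> = (\<Sum>\<sigma>\<in>UNIV. of_real (t * lam x) * cre (x,\<sigma>) (weighted_ann Ns lam \<sigma> \<psi>) S)"
      unfolding weighted_ann_def[abs_def] cre_sum by (simp add: sum_distrib_left)
    finally show ?thesis .
  qed
  then show "hubbardH Ns (\<lambda>x y. t * lam x * lam y) U \<psi> S = (\<Sum>\<sigma>\<in>UNIV. \<Sum>x<Ns. of_real (t * lam x) * cre (x,\<sigma>) (weighted_ann Ns lam \<sigma> \<psi>) S)
     + of_real U * (\<Sum>x<Ns. double_occ x \<psi> S)"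
    unfolding hubbardH_def by (simp add: sum.swap[of _ "{..<Ns}" UNIV])
qed

lemma hubbardH_quadratic_form:
  "fock_inner (modes Ns) \<psi> (hubbardH Ns (\<lambda>x y. t * lam x * lam y) U \<psi>) =
     of_real (t * (\<Sum>\<sigma>\<in>UNIV. fock_sqnorm (modes Ns) (weighted_ann Ns lam \<sigma> \<psi>))
              + U * (\<Sum>x<Ns. fock_sqnorm (modes Ns) (double_occ x \<psi>)))"
proof -
  let ?M = "modes Ns" and ?A = "\<lambda>\<sigma>. weighted_ann Ns lam \<sigma> \<psi>"
  have kinetic: "(\<Sum>x<Ns. of_real (t * lam x) * fock_inner ?M \<psi> (cre (x,\<sigma>) (?A \<sigma>)))
      = of_real (t * fock_sqnorm ?M (?A \<sigma>))" for \<sigma>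
  proof -
    have "(\<Sum>x<Ns. of_real (t * lam x) * fock_inner ?M \<psi> (cre (x,\<sigma>) (?A \<sigma>)))
        = of_real t * (\<Sum>x<Ns. cnj (of_real (lam x)) * fock_inner ?M (ann (x,\<sigma>) \<psi>) (?A \<sigma>))"
      by (simp add: cre_adjoint_ann sum_distrib_left mult_ac)
    also have "\<dots> = of_real t * fock_inner ?M (?A \<sigma>) (?A \<sigma>)"
      unfolding weighted_ann_def[abs_def] fock_inner_sum_left fock_inner_scale_left ..
    finally show ?thesis by (simp add: fock_inner_self)
  qed
  have interaction: "fock_inner ?M \<psi> (double_occ x \<psi>) = of_real (fock_sqnorm ?M (double_occ x \<psi>))" for x
    unfolding fock_inner_self[symmetric] fock_inner_def by (intro sum.cong) (auto simp: double_occ_apply)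
  show ?thesis
    unfolding hubbardH_rank_one fock_inner_add_right fock_inner_sum_right fock_inner_scale_right
      kinetic interaction
    by (simp add: sum_distrib_left)
qed

lemma fock_sqnorm_eq_0_imp_zero:
  assumes "finite M" "fock_sqnorm M \<phi> = 0" "\<And>S. \<phi> S \<noteq> 0 \<Longrightarrow> S \<subseteq> M"
  shows "\<phi> = (\<lambda>_. 0)"
proof
  fix S
  show "\<phi> S = 0"
    using assms fock_sqnorm_eq_0_iff[of M \<phi>] by (cases "S \<subseteq> M") auto
qed

lemma Hspace_support: "\<psi> \<in> Hspace Ns Ne \<Longrightarrow> \<psi> S \<noteq> 0 \<Longrightarrow> S \<subseteq> modes Ns"
  unfolding Hspace_def by blast

lemma weighted_ann_support:
  assumes "\<psi> \<in> Hspace Ns Ne" "weighted_ann Ns lam \<sigma> \<psi> S \<noteq> 0"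
  shows "S \<subseteq> modes Ns"
proof -
  obtain y where "ann (y,\<sigma>) \<psi> S \<noteq> 0"
    using assms(2) unfolding weighted_ann_def by (metis (no_types, lifting) mult_zero_right sum.neutral)
  then have "\<psi> (insert (y,\<sigma>) S) \<noteq> 0" by (auto simp: ann_def split: if_splits)
  then show ?thesis using Hspace_support[OF assms(1)] by blast
qed

lemma hubbardH_eigenvalue_nonneg:
  assumes "t \<ge> 0" "U \<ge> 0" "\<psi> \<in> Hspace Ns Ne" "\<psi> S \<noteq> 0"
    and "hubbardH Ns (\<lambda>x y. t * lam x * lam y) U \<psi> = (\<lambda>S. of_real E * \<psi> S)"
  shows "E \<ge> 0"
proof -
  let ?M = "modes Ns"
  have "of_real (E * fock_sqnorm ?M \<psi>) = fock_inner ?M \<psi> (hubbardH Ns (\<lambda>x y. t * lam x * lam y) U \<psi>)"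
    unfolding assms(5) fock_inner_scale_right fock_inner_self by simp
  also have "\<dots> = of_real (t * (\<Sum>\<sigma>\<in>UNIV. fock_sqnorm ?M (weighted_ann Ns lam \<sigma> \<psi>))
                           + U * (\<Sum>x<Ns. fock_sqnorm ?M (double_occ x \<psi>)))"
    by (rule hubbardH_quadratic_form)
  finally have "E * fock_sqnorm ?M \<psi> = t * (\<Sum>\<sigma>\<in>UNIV. fock_sqnorm ?M (weighted_ann Ns lam \<sigma> \<psi>))
                           + U * (\<Sum>x<Ns. fock_sqnorm ?M (double_occ x \<psi>))"
    by (simp only: of_real_eq_iff)
  then have "E * fock_sqnorm ?M \<psi> \<ge> 0"
    using assms(1,2) by (simp add: fock_sqnorm_nonneg sum_nonneg)
  moreover have "fock_sqnorm ?M \<psi> > 0"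
    unfolding fock_sqnorm_def
    by (rule sum_pos2[of _ S]) (use assms(3,4) Hspace_support in auto)
  ultimately show ?thesis by (simp add: zero_le_mult_iff)
qed

lemma hubbardH_eq_0_imp_sqnorms_eq_0:
  assumes "t > 0" "U > 0" "hubbardH Ns (\<lambda>x y. t * lam x * lam y) U \<psi> = (\<lambda>_. 0)"
  shows "fock_sqnorm (modes Ns) (weighted_ann Ns lam \<sigma> \<psi>) = 0"
    and "x < Ns \<Longrightarrow> fock_sqnorm (modes Ns) (double_occ x \<psi>) = 0"
proof -
  let ?M = "modes Ns"
  let ?K = "\<Sum>\<sigma>\<in>UNIV. fock_sqnorm ?M (weighted_ann Ns lam \<sigma> \<psi>)"
  let ?D = "\<Sum>x<Ns. fock_sqnorm ?M (double_occ x \<psi>)"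
  have "of_real (t * ?K + U * ?D) = fock_inner ?M \<psi> (\<lambda>_. 0)"
    using hubbardH_quadratic_form[of Ns \<psi> t lam U] unfolding assms(3) by simp
  also have "\<dots> = 0" by (simp add: fock_inner_def)
  finally have "t * ?K + U * ?D = 0" by (simp only: of_real_eq_0_iff)
  moreover have "t * ?K \<ge> 0" "U * ?D \<ge> 0"
    using assms(1,2) by (simp_all add: fock_sqnorm_nonneg sum_nonneg)
  ultimately have "t * ?K = 0" "U * ?D = 0" by linarith+
  then have "?K = 0" "?D = 0" using assms(1,2) by simp_all
  then show "fock_sqnorm ?M (weighted_ann Ns lam \<sigma> \<psi>) = 0"
    and "x < Ns \<Longrightarrow> fock_sqnorm ?M (double_occ x \<psi>) = 0"
    by (simp_all add: fock_sqnorm_nonneg sum_nonneg_eq_0_iff)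
qed

lemma no_double_occupancy_if_sqnorms_eq_0:
  assumes H: "\<psi> \<in> Hspace Ns Ne" and D0: "\<And>x. x < Ns \<Longrightarrow> fock_sqnorm (modes Ns) (double_occ x \<psi>) = 0"
  shows "no_double_occupancy \<psi>"
  unfolding no_double_occupancy_def
proof (intro allI impI)
  fix S :: "mode set" and x :: nat
  assume double: "(x,True) \<in> S \<and> (x,False) \<in> S"
  show "\<psi> S = 0"
  proof (rule ccontr)
    assume "\<psi> S \<noteq> 0"
    then have "x < Ns" using double Hspace_support[OF H] by blast
    have "double_occ x \<psi> = (\<lambda>_. 0)"
      by (rule fock_sqnorm_eq_0_imp_zero[OF _ D0[OF \<open>x < Ns\<close>]])
         (use Hspace_support[OF H] in \<open>auto simp: double_occ_apply split: if_splits\<close>)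
    then show False using \<open>\<psi> S \<noteq> 0\<close> double by (metis double_occ_apply)
  qed
qed

lemma hubbardH_eq_0_iff:
  assumes "t > 0" "U > 0" "\<psi> \<in> Hspace Ns Ne"
  shows "hubbardH Ns (\<lambda>x y. t * lam x * lam y) U \<psi> = (\<lambda>_. 0) \<longleftrightarrow>
           (\<forall>\<sigma>. weighted_ann Ns lam \<sigma> \<psi> = (\<lambda>_. 0)) \<and> no_double_occupancy \<psi>"
proof
  assume H0: "hubbardH Ns (\<lambda>x y. t * lam x * lam y) U \<psi> = (\<lambda>_. 0)"
  have "weighted_ann Ns lam \<sigma> \<psi> = (\<lambda>_. 0)" for \<sigma>
    by (rule fock_sqnorm_eq_0_imp_zero[OF _ hubbardH_eq_0_imp_sqnorms_eq_0(1)[OF assms(1,2) H0]])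
       (use weighted_ann_support[OF assms(3)] in auto)
  moreover have "no_double_occupancy \<psi>"
    using assms(3) hubbardH_eq_0_imp_sqnorms_eq_0(2)[OF assms(1,2) H0]
    by (rule no_double_occupancy_if_sqnorms_eq_0)
  ultimately show "(\<forall>\<sigma>. weighted_ann Ns lam \<sigma> \<psi> = (\<lambda>_. 0)) \<and> no_double_occupancy \<psi>" by blast
next
  assume "(\<forall>\<sigma>. weighted_ann Ns lam \<sigma> \<psi> = (\<lambda>_. 0)) \<and> no_double_occupancy \<psi>"
  then have "weighted_ann Ns lam \<sigma> \<psi> = (\<lambda>_. 0)" and "double_occ x \<psi> S = 0" for \<sigma> x S
    by (auto simp: double_occ_apply no_double_occupancy_def)
  then show "hubbardH Ns (\<lambda>x y. t * lam x * lam y) U \<psi> = (\<lambda>_. 0)"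
    unfolding hubbardH_rank_one by (simp add: cre_zero)
qed

section \<open>States with one hole\<close>

lemma minus_one_power_pred: "0 < n \<Longrightarrow> (-1::complex) ^ (n - 1) = - ((-1) ^ n)"
  by (cases n) auto

lemma card_insert_swap:
  "finite A \<Longrightarrow> x \<in> A \<Longrightarrow> y \<notin> A \<Longrightarrow> card (insert y (A - {x})) = card A"
  by (metis DiffD1 card_Suc_Diff1 card_insert_disjoint finite_Diff)

locale rank_one_hubbard =
  fixes Ns :: nat and lam :: "nat \<Rightarrow> real"
  assumes two_sites: "2 \<le> Ns" and lam_pos: "\<forall>x<Ns. lam x > 0"
begin

abbreviation Ne :: nat where
  "Ne \<equiv> Ns - 1"

definition hole_conf :: "nat \<Rightarrow> (nat \<Rightarrow> bool) \<Rightarrow> mode set" where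
  "hole_conf h s = (\<lambda>x. (x, s x)) ` ({..<Ns} - {h})"

definition is_hole_conf :: "mode set \<Rightarrow> bool" where
  "is_hole_conf S \<longleftrightarrow> (\<exists>h<Ns. \<exists>s. S = hole_conf h s)"

definition hole :: "mode set \<Rightarrow> nat" where
  "hole S = (THE h. h < Ns \<and> (\<exists>s. S = hole_conf h s))"

definition up_sites :: "nat \<Rightarrow> (nat \<Rightarrow> bool) \<Rightarrow> nat set" where
  "up_sites h s = {x. x < Ns \<and> x \<noteq> h \<and> s x}"

(* The sign (-1)^h absorbs the fermion sign picked up when an electron hops into the hole. *)
definition hole_weight :: "nat \<Rightarrow> complex" where
  "hole_weight h = (-1) ^ h * of_real (lam h)"

definition sym_state :: "(nat \<Rightarrow> complex) \<Rightarrow> fvec" where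
  "sym_state F S = (if is_hole_conf S then F (card {m\<in>S. snd m}) * hole_weight (hole S) else 0)"

lemma hole_conf_mem [simp]: "(y,b) \<in> hole_conf h s \<longleftrightarrow> y < Ns \<and> y \<noteq> h \<and> b = s y"
  unfolding hole_conf_def by auto

lemma hole_conf_eq_imp_hole_eq:
  assumes "h < Ns" "h' < Ns" "hole_conf h s = hole_conf h' s'"
  shows "h = h'"
proof (rule ccontr)
  assume "h \<noteq> h'"
  then have "(h', s h') \<in> hole_conf h s" using assms(2) by simp
  then show False using assms(3) by simp
qed

lemma hole_hole_conf [simp]: "h < Ns \<Longrightarrow> hole (hole_conf h s) = h"
  unfolding hole_def by (rule the_equality) (auto dest: hole_conf_eq_imp_hole_eq)

lemma hole_weight_nonzero: "h < Ns \<Longrightarrow> hole_weight h \<noteq> 0"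
  using lam_pos unfolding hole_weight_def by auto

lemma card_hole_conf: "h < Ns \<Longrightarrow> card (hole_conf h s) = Ne"
  unfolding hole_conf_def by (simp add: card_image inj_on_def)

lemma hole_conf_subset_modes: "hole_conf h s \<subseteq> modes Ns"
  unfolding hole_conf_def by auto

lemma card_up_modes_hole_conf: "card {m\<in>hole_conf h s. snd m} = card (up_sites h s)"
proof -
  have "{m\<in>hole_conf h s. snd m} = (\<lambda>x. (x, s x)) ` up_sites h s"
    unfolding hole_conf_def up_sites_def by auto
  then show ?thesis by (simp add: card_image inj_on_def)
qed

lemma card_up_sites_le:
  assumes "h < Ns"
  shows "card (up_sites h s) \<le> Ne"
proof -
  have "card (up_sites h s) \<le> card ({..<Ns} - {h})"
    by (rule card_mono) (auto simp: up_sites_def)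
  then show ?thesis using assms by simp
qed

lemma hole_conf_cong: "(\<And>x. x < Ns \<Longrightarrow> x \<noteq> h \<Longrightarrow> s x = s' x) \<Longrightarrow> hole_conf h s = hole_conf h s'"
  unfolding hole_conf_def by (auto simp: image_def)

lemma hole_conf_update:
  "x < Ns \<Longrightarrow> x \<noteq> h \<Longrightarrow> hole_conf h (s(x := b)) = insert (x,b) (hole_conf h s - {(x, s x)})"
  by (auto simp: hole_conf_def image_def)

lemma hole_conf_move:
  "h < Ns \<Longrightarrow> y < Ns \<Longrightarrow> y \<noteq> h \<Longrightarrow>
     hole_conf y (s(h := s y)) = insert (h, s y) (hole_conf h s - {(y, s y)})"
  by (auto simp: hole_conf_def image_def)

lemma card_up_sites_move:
  assumes "h < Ns" "y < Ns" "y \<noteq> h"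
  shows "card (up_sites y (s(h := s y))) = card (up_sites h s)"
proof (cases "s y")
  case True
  then have "up_sites y (s(h := s y)) = insert h (up_sites h s - {y})" "y \<in> up_sites h s"
    using assms by (auto simp: up_sites_def)
  moreover have "finite (up_sites h s)" "h \<notin> up_sites h s"
    by (simp_all add: up_sites_def)
  ultimately show ?thesis
    by (metis card_insert_swap)
next
  case False
  then have "up_sites y (s(h := s y)) = up_sites h s"
    using assms by (auto simp: up_sites_def)
  then show ?thesis by simp
qed

lemma sym_state_hole_conf [simp]:
  "h < Ns \<Longrightarrow> sym_state F (hole_conf h s) = F (card (up_sites h s)) * hole_weight h"
  unfolding sym_state_def is_hole_conf_def by (auto simp: card_up_modes_hole_conf)

lemma sym_state_not_hole_conf: "\<not> is_hole_conf S \<Longrightarrow> sym_state F S = 0"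
  unfolding sym_state_def by simp

lemma is_hole_confI:
  assumes sub: "S \<subseteq> modes Ns" and card: "card S = Ne"
    and single: "\<And>x. \<not> ((x,True) \<in> S \<and> (x,False) \<in> S)"
  shows "is_hole_conf S"
proof -
  have "finite S" using sub by (rule finite_subset) simp
  have "inj_on fst S"
  proof (rule inj_onI)
    fix a b assume "a \<in> S" "b \<in> S" "fst a = fst b"
    then show "a = b" using single by (cases a; cases b; cases "snd a"; cases "snd b") auto
  qed
  then have "card (fst ` S) = Ne" using card by (simp add: card_image)
  moreover have sites: "fst ` S \<subseteq> {..<Ns}" using sub by auto
  ultimately have "card ({..<Ns} - fst ` S) = 1"
    using card_Diff_subset[OF finite_imageI[OF \<open>finite S\<close>] sites] two_sites by simp
  then obtain h where h: "{..<Ns} - fst ` S = {h}" using card_1_singletonE by blast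
  define s where "s x = ((x,True) \<in> S)" for x
  have "S = hole_conf h s"
  proof (intro set_eqI iffI)
    fix m assume m: "m \<in> S"
    then have "fst m \<in> fst ` S" by blast
    then have "fst m \<noteq> h" using h by blast
    moreover have "fst m < Ns" using m sub by (cases m) auto
    moreover have "snd m = s (fst m)"
      using m single unfolding s_def by (cases m; cases "snd m") auto
    ultimately show "m \<in> hole_conf h s" by (cases m) simp
  next
    fix m assume m: "m \<in> hole_conf h s"
    then have "fst m \<in> fst ` S" using h by (cases m) auto
    then obtain c where "(fst m, c) \<in> S" by (metis imageE prod.collapse)
    then show "m \<in> S" using m unfolding s_def by (cases m; cases c; cases "(fst m, True) \<in> S") auto
  qed
  then show ?thesis unfolding is_hole_conf_def using h by blast
qed

lemma fsign_hole_conf_minus: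
  assumes "h < Ns" "y < Ns" "h \<noteq> y" "z = h \<or> z = y"
  shows "fsign (hole_conf h s - {(y, s y)}) (z,\<sigma>) = (if z = min h y then (-1) ^ z else - ((-1) ^ z))"
proof -
  have "{m \<in> hole_conf h s - {(y, s y)}. midx m < midx (z,\<sigma>)} =
        (\<lambda>x. (x, s x)) ` {x. x < Ns \<and> x \<noteq> h \<and> x \<noteq> y \<and> x < z}"
    using assms by (auto simp: hole_conf_def midx_less)
  then have card: "card {m \<in> hole_conf h s - {(y, s y)}. midx m < midx (z,\<sigma>)} =
                   card {x. x < Ns \<and> x \<noteq> h \<and> x \<noteq> y \<and> x < z}"
    by (simp add: card_image inj_on_def)
  show ?thesis
  proof (cases "z = min h y")
    case True
    then have "{x. x < Ns \<and> x \<noteq> h \<and> x \<noteq> y \<and> x < z} = {..<z}" using assms by auto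
    then show ?thesis using True card unfolding fsign_def by simp
  next
    case False
    then have "{x. x < Ns \<and> x \<noteq> h \<and> x \<noteq> y \<and> x < z} = {..<z} - {min h y}" "min h y < z"
      using assms by auto
    then have "card {x. x < Ns \<and> x \<noteq> h \<and> x \<noteq> y \<and> x < z} = z - 1" "0 < z" by auto
    then show ?thesis using False card minus_one_power_pred[of z] unfolding fsign_def by simp
  qed
qed

lemma weighted_ann_hole_conf:
  assumes h: "h < Ns" and y: "y < Ns" "h \<noteq> y" and nd: "no_double_occupancy \<psi>"
  shows "weighted_ann Ns lam (s y) \<psi> (hole_conf h s - {(y, s y)}) =
     (if h < y then 1 else -1) * (hole_weight h * \<psi> (hole_conf y (s(h := s y))) - hole_weight y * \<psi> (hole_conf h s))"
proof -
  let ?T = "hole_conf h s - {(y, s y)}"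
  have others: "ann (z, s y) \<psi> ?T = 0" if "z < Ns" "z \<noteq> h" "z \<noteq> y" for z
  proof (cases "s z = s y")
    case False
    \<comment> \<open>adding an electron of spin s y at z would doubly occupy z\<close>
    then have "(z,True) \<in> insert (z, s y) ?T \<and> (z,False) \<in> insert (z, s y) ?T"
      using that by (cases "s z") auto
    then have "\<psi> (insert (z, s y) ?T) = 0"
      using nd[unfolded no_double_occupancy_def, rule_format, of z "insert (z, s y) ?T"] by blast
    then show ?thesis by (simp add: ann_def)
  qed (use that in \<open>simp add: ann_def\<close>)
  have "weighted_ann Ns lam (s y) \<psi> ?T = (\<Sum>z\<in>{h,y}. of_real (lam z) * ann (z, s y) \<psi> ?T)"
    unfolding weighted_ann_def by (rule sum.mono_neutral_right) (use others h y in auto)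
  also have "\<dots> = of_real (lam h) * (fsign ?T (h, s y) * \<psi> (hole_conf y (s(h := s y))))
                 + of_real (lam y) * (fsign ?T (y, s y) * \<psi> (hole_conf h s))"
    using hole_conf_move[OF h y(1) y(2)[symmetric], of s] h y
    by (auto simp: ann_def insert_absorb)
  finally show ?thesis
    using h y by (auto simp: fsign_hole_conf_minus hole_weight_def algebra_simps min_def)
qed

lemma no_double_occupancy_sym_state: "no_double_occupancy (sym_state F)"
  unfolding no_double_occupancy_def
proof (intro allI impI)
  fix S :: "mode set" and x :: nat
  assume double: "(x,True) \<in> S \<and> (x,False) \<in> S"
  show "sym_state F S = 0"
  proof (cases "is_hole_conf S")
    case True
    then obtain h s where "S = hole_conf h s" unfolding is_hole_conf_def by blast
    with double show ?thesis by auto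
  qed (rule sym_state_not_hole_conf)
qed

lemma weighted_ann_sym_state: "weighted_ann Ns lam \<sigma> (sym_state F) = (\<lambda>_. 0)"
proof
  fix S
  show "weighted_ann Ns lam \<sigma> (sym_state F) S = 0"
  proof (cases "\<exists>z<Ns. (z,\<sigma>) \<notin> S \<and> is_hole_conf (insert (z,\<sigma>) S)")
    case False
    then have "ann (z,\<sigma>) (sym_state F) S = 0" if "z < Ns" for z
      using that by (auto simp: ann_def sym_state_not_hole_conf)
    then show ?thesis unfolding weighted_ann_def by simp
  next
    case True
    then obtain z h s where z: "z < Ns" "(z,\<sigma>) \<notin> S" and h: "h < Ns"
      and S: "insert (z,\<sigma>) S = hole_conf h s"
      unfolding is_hole_conf_def by blast
    then have "(z,\<sigma>) \<in> hole_conf h s" by blast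
    then have zh: "z \<noteq> h" and \<sigma>: "\<sigma> = s z" by simp_all
    then have "S = hole_conf h s - {(z, s z)}" using S z(2) by blast
    then show ?thesis
      using weighted_ann_hole_conf[OF h z(1) zh[symmetric] no_double_occupancy_sym_state] h z(1) zh
      by (simp add: \<sigma> card_up_sites_move algebra_simps)
  qed
qed

section \<open>Ground states\<close>

definition reduced_amp :: "fvec \<Rightarrow> nat \<Rightarrow> (nat \<Rightarrow> bool) \<Rightarrow> complex" where
  "reduced_amp \<psi> h s = \<psi> (hole_conf h s) / hole_weight h"

lemma reduced_amp_cong:
  assumes "\<And>x. x < Ns \<Longrightarrow> x \<noteq> h \<Longrightarrow> s x = s' x"
  shows "reduced_amp \<psi> h s = reduced_amp \<psi> h s'"
  unfolding reduced_amp_def by (simp add: hole_conf_cong[OF assms])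

lemma card_up_sites_initial: "u \<le> Ne \<Longrightarrow> card (up_sites Ne (\<lambda>x. x < u)) = u"
proof -
  assume "u \<le> Ne"
  then have "up_sites Ne (\<lambda>x. x < u) = {..<u}" using two_sites by (auto simp: up_sites_def)
  then show ?thesis by simp
qed

context
  fixes \<psi> :: fvec
  assumes annihilated: "\<And>\<sigma>. weighted_ann Ns lam \<sigma> \<psi> = (\<lambda>_. 0)"
    and no_double: "no_double_occupancy \<psi>"
begin

lemma reduced_amp_move:
  assumes "h < Ns" "y < Ns" "h \<noteq> y"
  shows "reduced_amp \<psi> y (s(h := s y)) = reduced_amp \<psi> h s"
proof -
  have "hole_weight h * \<psi> (hole_conf y (s(h := s y))) = hole_weight y * \<psi> (hole_conf h s)"
    using weighted_ann_hole_conf[OF assms no_double, of s] annihilated[of "s y"]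
    by (auto split: if_splits)
  then show ?thesis
    unfolding reduced_amp_def using assms hole_weight_nonzero by (simp add: field_simps)
qed

lemma reduced_amp_swap:
  assumes "h < Ns" "a < Ns" "b < Ns" and "h \<noteq> a" "h \<noteq> b" "a \<noteq> b"
  shows "reduced_amp \<psi> h (s(a := s b, b := s a)) = reduced_amp \<psi> h s"
proof -
  \<comment> \<open>the hole travels from h to a, then to b and back to h, which exchanges the spins at a and b\<close>
  define s1 where "s1 = s(h := s a)"
  define s2 where "s2 = s1(a := s1 b)"
  define s3 where "s3 = s2(b := s2 h)"
  have "reduced_amp \<psi> h (s(a := s b, b := s a)) = reduced_amp \<psi> h s3"
    by (rule reduced_amp_cong) (use assms in \<open>auto simp: s1_def s2_def s3_def\<close>)
  also have "\<dots> = reduced_amp \<psi> b s2"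
    unfolding s3_def using assms by (intro reduced_amp_move) auto
  also have "\<dots> = reduced_amp \<psi> a s1"
    unfolding s2_def using assms by (intro reduced_amp_move) auto
  also have "\<dots> = reduced_amp \<psi> h s"
    unfolding s1_def using assms by (intro reduced_amp_move) auto
  finally show ?thesis .
qed

lemma reduced_amp_same_hole:
  assumes "h < Ns" and "card (up_sites h s) = card (up_sites h s')"
  shows "reduced_amp \<psi> h s = reduced_amp \<psi> h s'"
  using assms(2)
proof (induction "card (up_sites h s - up_sites h s')" arbitrary: s rule: less_induct)
  case less
  have fin: "finite (up_sites h s)" "finite (up_sites h s')" by (simp_all add: up_sites_def)
  show ?case
  proof (cases "up_sites h s \<subseteq> up_sites h s'")
    case True
    then have "up_sites h s = up_sites h s'" using fin less.prems by (simp add: card_subset_eq)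
    then show ?thesis by (intro reduced_amp_cong) (auto simp: up_sites_def set_eq_iff)
  next
    case False
    then obtain x where x: "x \<in> up_sites h s - up_sites h s'" by blast
    have "\<not> up_sites h s' \<subseteq> up_sites h s"
    proof
      assume "up_sites h s' \<subseteq> up_sites h s"
      then have "up_sites h s' = up_sites h s" using fin less.prems by (simp add: card_subset_eq)
      then show False using x by blast
    qed
    then obtain y where y: "y \<in> up_sites h s' - up_sites h s" by blast
    define s2 where "s2 = s(x := s y, y := s x)"
    have up2: "up_sites h s2 = insert y (up_sites h s - {x})"
      using x y unfolding s2_def up_sites_def by auto
    then have "up_sites h s2 - up_sites h s' = (up_sites h s - up_sites h s') - {x}"
      using y by auto
    then have fewer: "card (up_sites h s2 - up_sites h s') < card (up_sites h s - up_sites h s')"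
      using card_Diff1_less[of "up_sites h s - up_sites h s'" x] x fin by simp
    have "card (up_sites h s2) = card (up_sites h s)"
      unfolding up2 using x y fin by (metis DiffD1 DiffD2 card_insert_swap)
    then have "reduced_amp \<psi> h s2 = reduced_amp \<psi> h s'"
      using fewer less.prems by (intro less.hyps) simp_all
    moreover have "reduced_amp \<psi> h s2 = reduced_amp \<psi> h s"
      unfolding s2_def using x y assms(1) by (intro reduced_amp_swap) (auto simp: up_sites_def)
    ultimately show ?thesis by simp
  qed
qed

lemma reduced_amp_eq:
  assumes "h < Ns" "h' < Ns" "card (up_sites h s) = card (up_sites h' s')"
  shows "reduced_amp \<psi> h s = reduced_amp \<psi> h' s'"
proof (cases "h = h'")
  case True
  with assms(3) have "card (up_sites h s) = card (up_sites h s')" by simp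
  then have "reduced_amp \<psi> h s = reduced_amp \<psi> h s'" by (rule reduced_amp_same_hole[OF assms(1)])
  with True show ?thesis by simp
next
  case False
  have "reduced_amp \<psi> h s = reduced_amp \<psi> h' (s(h := s h'))"
    using reduced_amp_move[OF assms(1,2) False] by simp
  also have "\<dots> = reduced_amp \<psi> h' s'"
    using assms False by (intro reduced_amp_same_hole) (simp_all add: card_up_sites_move)
  finally show ?thesis .
qed

lemma kernel_eq_sym_state:
  assumes "\<psi> \<in> Hspace Ns Ne"
  shows "\<psi> = sym_state (\<lambda>u. reduced_amp \<psi> Ne (\<lambda>x. x < u))"
proof
  fix S
  show "\<psi> S = sym_state (\<lambda>u. reduced_amp \<psi> Ne (\<lambda>x. x < u)) S"
  proof (cases "is_hole_conf S")
    case True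
    then obtain h s where h: "h < Ns" and S: "S = hole_conf h s" unfolding is_hole_conf_def by blast
    have "reduced_amp \<psi> Ne (\<lambda>x. x < card (up_sites h s)) = reduced_amp \<psi> h s"
      using h two_sites card_up_sites_initial[OF card_up_sites_le[OF h]] by (intro reduced_amp_eq) simp_all
    then show ?thesis
      unfolding S using h hole_weight_nonzero by (simp add: reduced_amp_def)
  next
    case False
    have "\<psi> S = 0"
    proof (rule ccontr)
      assume "\<psi> S \<noteq> 0"
      have "S \<subseteq> modes Ns" "card S = Ne" using assms \<open>\<psi> S \<noteq> 0\<close> unfolding Hspace_def by auto
      moreover have "\<not> ((x,True) \<in> S \<and> (x,False) \<in> S)" for x
        using no_double[unfolded no_double_occupancy_def, rule_format, of x S] \<open>\<psi> S \<noteq> 0\<close> by blast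
      ultimately have "is_hole_conf S" by (rule is_hole_confI)
      then show False using False by simp
    qed
    then show ?thesis using False by (simp add: sym_state_not_hole_conf)
  qed
qed

end

lemma sym_state_Hspace: "sym_state F \<in> Hspace Ns Ne"
  unfolding Hspace_def
proof (intro CollectI allI impI)
  fix S assume "sym_state F S \<noteq> 0"
  then have "is_hole_conf S" using sym_state_not_hole_conf by blast
  then obtain h s where "h < Ns" "S = hole_conf h s" unfolding is_hole_conf_def by blast
  then show "S \<subseteq> modes Ns \<and> card S = Ne" using hole_conf_subset_modes card_hole_conf by simp
qed

lemma hubbardH_sym_state:
  assumes "t > 0" "U > 0"
  shows "hubbardH Ns (\<lambda>x y. t * lam x * lam y) U (sym_state F) = (\<lambda>_. 0)"
  using hubbardH_eq_0_iff[OF assms sym_state_Hspace] weighted_ann_sym_state no_double_occupancy_sym_state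
  by blast

lemma groundEnergy_eq_0:
  assumes "t > 0" "U > 0"
  shows "groundEnergy Ns (\<lambda>x y. t * lam x * lam y) U Ne = 0"
  unfolding groundEnergy_def
proof (rule cInf_eq_minimum)
  have "sym_state (\<lambda>_. 1) (hole_conf 0 s) \<noteq> 0" for s
    using two_sites hole_weight_nonzero[of 0] by simp
  then show "0 \<in> {E. \<exists>\<psi>\<in>Hspace Ns Ne. (\<exists>S. \<psi> S \<noteq> 0) \<and>
        hubbardH Ns (\<lambda>x y. t * lam x * lam y) U \<psi> = (\<lambda>S. of_real E * \<psi> S)}"
    using sym_state_Hspace hubbardH_sym_state[OF assms] by fastforce
next
  fix E assume "E \<in> {E. \<exists>\<psi>\<in>Hspace Ns Ne. (\<exists>S. \<psi> S \<noteq> 0) \<and>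
        hubbardH Ns (\<lambda>x y. t * lam x * lam y) U \<psi> = (\<lambda>S. of_real E * \<psi> S)}"
  then obtain \<psi> S where "\<psi> \<in> Hspace Ns Ne" "\<psi> S \<noteq> 0"
    "hubbardH Ns (\<lambda>x y. t * lam x * lam y) U \<psi> = (\<lambda>S. of_real E * \<psi> S)"
    by blast
  then show "0 \<le> E"
    using assms by (intro hubbardH_eigenvalue_nonneg[of t U \<psi> Ns Ne S lam E]) auto
qed

lemma groundSpace_eq_range_sym_state:
  assumes "t > 0" "U > 0"
  shows "groundSpace Ns (\<lambda>x y. t * lam x * lam y) U Ne = range sym_state"
proof (intro equalityI subsetI)
  fix \<psi> assume "\<psi> \<in> groundSpace Ns (\<lambda>x y. t * lam x * lam y) U Ne"
  then have H: "\<psi> \<in> Hspace Ns Ne" and "hubbardH Ns (\<lambda>x y. t * lam x * lam y) U \<psi> = (\<lambda>_. 0)"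
    unfolding groundSpace_def groundEnergy_eq_0[OF assms] by auto
  then have "weighted_ann Ns lam \<sigma> \<psi> = (\<lambda>_. 0)" "no_double_occupancy \<psi>" for \<sigma>
    using hubbardH_eq_0_iff[OF assms H] by blast+
  then show "\<psi> \<in> range sym_state" using kernel_eq_sym_state[OF _ _ H] by blast
next
  fix \<psi> assume "\<psi> \<in> range sym_state"
  then show "\<psi> \<in> groundSpace Ns (\<lambda>x y. t * lam x * lam y) U Ne"
    unfolding groundSpace_def groundEnergy_eq_0[OF assms]
    using sym_state_Hspace hubbardH_sym_state[OF assms] by auto
qed

section \<open>Total spin\<close>

lemma card_spin_sites:
  assumes "h < Ns"
  shows "card {x. x < Ns \<and> x \<noteq> h \<and> s x = \<sigma>} = (if \<sigma> then card (up_sites h s) else Ne - card (up_sites h s))"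
proof (cases \<sigma>)
  case False
  have "{x. x < Ns \<and> x \<noteq> h \<and> \<not> s x} = ({..<Ns} - {h}) - up_sites h s"
    by (auto simp: up_sites_def)
  moreover have "up_sites h s \<subseteq> {..<Ns} - {h}" by (auto simp: up_sites_def)
  ultimately show ?thesis using False assms by (simp add: card_Diff_subset up_sites_def)
qed (simp add: up_sites_def)

lemma card_up_sites_update:
  assumes "x < Ns" "x \<noteq> h"
  shows "card (up_sites h (s(x := \<tau>))) =
    (if s x = \<tau> then card (up_sites h s) else if \<tau> then card (up_sites h s) + 1 else card (up_sites h s) - 1)"
proof -
  have fin: "finite (up_sites h s)" by (simp add: up_sites_def)
  have "up_sites h (s(x := \<tau>)) = (if \<tau> then insert x (up_sites h s) else up_sites h s - {x})"
    using assms by (auto simp: up_sites_def)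
  moreover have "x \<in> up_sites h s \<longleftrightarrow> s x" using assms by (simp add: up_sites_def)
  ultimately show ?thesis using fin by (cases \<tau>; cases "s x") (auto simp: insert_absorb)
qed

lemma cre_ann_sym_state_hole_conf:
  assumes "h < Ns" "x < Ns"
  shows "cre (x,\<sigma>) (ann (x,\<tau>) (sym_state F)) (hole_conf h s) =
    (if x \<noteq> h \<and> s x = \<sigma> then F (card (up_sites h (s(x := \<tau>)))) * hole_weight h else 0)"
proof (cases "x \<noteq> h \<and> s x = \<sigma>")
  case True
  then have "(x,\<sigma>) \<in> hole_conf h s" "(x,\<tau>) \<notin> hole_conf h s - {(x,\<sigma>)}" using assms by auto
  moreover have "insert (x,\<tau>) (hole_conf h s - {(x,\<sigma>)}) = hole_conf h (s(x := \<tau>))"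
    using hole_conf_update[of x h s \<tau>] assms True by simp
  ultimately show ?thesis using True assms(1) by (simp add: cre_ann_same_site)
next
  case False
  then have "\<not> ((x,\<sigma>) \<in> hole_conf h s \<and> (x,\<tau>) \<notin> hole_conf h s - {(x,\<sigma>)})" by auto
  then have "cre (x,\<sigma>) (ann (x,\<tau>) (sym_state F)) (hole_conf h s) = 0"
    by (simp only: cre_ann_same_site if_False)
  with False show ?thesis by auto
qed

lemma cre_ann_sym_state_not_hole_conf:
  assumes "\<not> is_hole_conf S"
  shows "cre (x,\<sigma>) (ann (x,\<tau>) (sym_state F)) S = 0"
proof (cases "(x,\<sigma>) \<in> S \<and> (x,\<tau>) \<notin> S - {(x,\<sigma>)} \<and> is_hole_conf (insert (x,\<tau>) (S - {(x,\<sigma>)}))")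
  case True
  then obtain h s' where h: "h < Ns" and T: "insert (x,\<tau>) (S - {(x,\<sigma>)}) = hole_conf h s'"
    unfolding is_hole_conf_def by blast
  then have "(x,\<tau>) \<in> hole_conf h s'" by blast
  then have x: "x < Ns" "x \<noteq> h" "s' x = \<tau>" by simp_all
  \<comment> \<open>undoing the spin change at x turns the hole configuration back into S\<close>
  have "S = insert (x,\<sigma>) (hole_conf h s' - {(x, s' x)})"
    using True T x(3) by blast
  then have "S = hole_conf h (s'(x := \<sigma>))" using hole_conf_update[OF x(1,2)] by simp
  then show ?thesis using assms h unfolding is_hole_conf_def by blast
qed (auto simp: cre_ann_same_site sym_state_not_hole_conf)

end

definition spin_gen :: "nat \<Rightarrow> bool \<Rightarrow> bool \<Rightarrow> fvec \<Rightarrow> fvec" where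
  "spin_gen Ns \<sigma> \<tau> \<psi> S = (\<Sum>x<Ns. cre (x,\<sigma>) (ann (x,\<tau>) \<psi>) S)"

lemma Stot_spin_gen:
  "Stot Ns a \<psi> S = 1/2 * (\<Sum>\<sigma>\<in>UNIV. \<Sum>\<tau>\<in>UNIV. pauli a \<sigma> \<tau> * spin_gen Ns \<sigma> \<tau> \<psi> S)"
  by (simp add: Stot_def spin_gen_def UNIV_bool sum.distrib sum_distrib_left)

definition spin_count :: "nat \<Rightarrow> bool \<Rightarrow> nat \<Rightarrow> nat" where
  "spin_count n \<sigma> u = (if \<sigma> then u else n - u)"

definition spin_shift :: "bool \<Rightarrow> bool \<Rightarrow> nat \<Rightarrow> nat" where
  "spin_shift \<sigma> \<tau> u = (if \<sigma> = \<tau> then u else if \<tau> then u + 1 else u - 1)"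

definition spin_action :: "nat \<Rightarrow> nat \<Rightarrow> (nat \<Rightarrow> complex) \<Rightarrow> nat \<Rightarrow> complex" where
  "spin_action n a F u =
     1/2 * (\<Sum>\<sigma>\<in>UNIV. \<Sum>\<tau>\<in>UNIV. pauli a \<sigma> \<tau> * (of_nat (spin_count n \<sigma> u) * F (spin_shift \<sigma> \<tau> u)))"

lemma spin_action_explicit:
  "spin_action n 1 F u = 1/2 * (of_nat u * F (u - 1) + of_nat (n - u) * F (u + 1))"
  "spin_action n 2 F u = 1/2 * (- \<i> * of_nat u * F (u - 1) + \<i> * of_nat (n - u) * F (u + 1))"
  "spin_action n 3 F u = 1/2 * (of_nat u * F u - of_nat (n - u) * F u)"
  by (simp_all add: spin_action_def spin_count_def spin_shift_def pauli_def UNIV_bool algebra_simps)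

lemma spin_action_casimir:
  assumes "u \<le> n"
  shows "(\<Sum>a\<in>{1,2,3}. spin_action n a (spin_action n a F) u) = of_real (real n / 2 * (real n / 2 + 1)) * F u"
proof -
  obtain d where d: "n = u + d" using assms le_Suc_ex by blast
  have sum3: "(\<Sum>a\<in>{1,2,3}. f a) = f 1 + f 2 + f (3::nat)" for f :: "nat \<Rightarrow> complex"
    by (simp add: add.assoc)
  show ?thesis
    unfolding sum3 spin_action_explicit d
    by (cases u; cases d) (simp_all add: field_simps power2_eq_square)
qed

context rank_one_hubbard
begin

lemma spin_gen_sym_state:
  "spin_gen Ns \<sigma> \<tau> (sym_state F) = sym_state (\<lambda>u. of_nat (spin_count Ne \<sigma> u) * F (spin_shift \<sigma> \<tau> u))"
proof
  fix S
  show "spin_gen Ns \<sigma> \<tau> (sym_state F) S = sym_state (\<lambda>u. of_nat (spin_count Ne \<sigma> u) * F (spin_shift \<sigma> \<tau> u)) S"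
  proof (cases "is_hole_conf S")
    case True
    then obtain h s where h: "h < Ns" and S: "S = hole_conf h s" unfolding is_hole_conf_def by blast
    let ?u = "card (up_sites h s)"
    let ?v = "spin_shift \<sigma> \<tau> ?u"
    have "spin_gen Ns \<sigma> \<tau> (sym_state F) S = (\<Sum>x<Ns. if x \<noteq> h \<and> s x = \<sigma> then F ?v * hole_weight h else 0)"
      unfolding spin_gen_def S
      by (intro sum.cong refl) (simp add: h cre_ann_sym_state_hole_conf card_up_sites_update spin_shift_def)
    also have "\<dots> = of_nat (card {x. x < Ns \<and> x \<noteq> h \<and> s x = \<sigma>}) * (F ?v * hole_weight h)"
      by (simp add: sum.If_cases Int_def conj_commute)
    finally show ?thesis unfolding S using h by (simp add: card_spin_sites spin_count_def)
  next
    case False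
    then show ?thesis by (simp add: spin_gen_def cre_ann_sym_state_not_hole_conf sym_state_not_hole_conf)
  qed
qed

lemma Stot_sym_state: "Stot Ns a (sym_state F) = sym_state (spin_action Ne a F)"
proof
  fix S
  show "Stot Ns a (sym_state F) S = sym_state (spin_action Ne a F) S"
    unfolding Stot_spin_gen spin_gen_sym_state
    by (cases "is_hole_conf S")
       (simp_all add: sym_state_def spin_action_def sum_distrib_left sum_distrib_right mult_ac)
qed

lemma Stot2_sym_state:
  "Stot2 Ns (sym_state F) = (\<lambda>S. of_real (real Ne / 2 * (real Ne / 2 + 1)) * sym_state F S)"
proof
  fix S
  have "Stot2 Ns (sym_state F) S = (\<Sum>a\<in>{1,2,3}. sym_state (spin_action Ne a (spin_action Ne a F)) S)"
    unfolding Stot2_def Stot_sym_state ..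
  also have "\<dots> = of_real (real Ne / 2 * (real Ne / 2 + 1)) * sym_state F S"
  proof (cases "is_hole_conf S")
    case True
    then obtain h s where h: "h < Ns" and S: "S = hole_conf h s" unfolding is_hole_conf_def by blast
    show ?thesis
      unfolding S sym_state_hole_conf[OF h] sum_distrib_right[symmetric]
      using spin_action_casimir[OF card_up_sites_le[OF h]] by simp
  qed (simp add: sym_state_not_hole_conf)
  finally show "Stot2 Ns (sym_state F) S = of_real (real Ne / 2 * (real Ne / 2 + 1)) * sym_state F S" .
qed

end

section \<open>Dimension of the ground space\<close>

interpretation fvec: vector_space "\<lambda>c (\<psi>::fvec). \<lambda>S. c * \<psi> S"
  by unfold_locales (auto simp: fun_eq_iff algebra_simps)

lemma sum_fun_apply: "(sum f A) x = (\<Sum>a\<in>A. f a x)"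
  by (induction A rule: infinite_finite_induct) auto

context rank_one_hubbard
begin

definition sym_basis :: "nat \<Rightarrow> fvec" where
  "sym_basis k = sym_state (\<lambda>u. if u = k then 1 else 0)"

lemma sym_basis_initial:
  assumes "k \<le> Ne"
  shows "sym_basis j (hole_conf Ne (\<lambda>x. x < k)) = (if j = k then hole_weight Ne else 0)"
  using card_up_sites_initial[OF assms] two_sites by (simp add: sym_basis_def)

lemma sym_state_eq_sum_sym_basis: "sym_state F = (\<Sum>k\<le>Ne. (\<lambda>S. F k * sym_basis k S))"
proof
  fix S
  show "sym_state F S = (\<Sum>k\<le>Ne. (\<lambda>S. F k * sym_basis k S)) S"
  proof (cases "is_hole_conf S")
    case True
    then obtain h s where h: "h < Ns" and S: "S = hole_conf h s" unfolding is_hole_conf_def by blast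
    have "(\<Sum>k\<le>Ne. F k * sym_basis k S) = (\<Sum>k\<le>Ne. if k = card (up_sites h s) then F k * hole_weight h else 0)"
      by (intro sum.cong) (auto simp: S h sym_basis_def)
    also have "\<dots> = sym_state F S"
      using card_up_sites_le[OF h] by (simp add: S h)
    finally show ?thesis by (simp add: sum_fun_apply)
  qed (simp add: sum_fun_apply sym_basis_def sym_state_not_hole_conf)
qed

lemma card_sym_basis: "card (sym_basis ` {..Ne}) = Ns"
proof -
  have "inj_on sym_basis {..Ne}"
  proof (rule inj_onI)
    fix j k assume "j \<in> {..Ne}" "k \<in> {..Ne}" "sym_basis j = sym_basis k"
    then show "j = k"
      using sym_basis_initial[of j j] sym_basis_initial[of j k] two_sites hole_weight_nonzero[of Ne]
      by (auto split: if_splits)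
  qed
  then show ?thesis using two_sites by (simp add: card_image)
qed

lemma independent_sym_basis: "fvec.independent (sym_basis ` {..Ne})"
proof (rule fvec.independent_if_scalars_zero)
  let ?B = "sym_basis ` {..Ne}"
  fix c v assume sum0: "(\<Sum>v\<in>?B. (\<lambda>S. c v * v S)) = 0" and "v \<in> ?B"
  then obtain k where k: "k \<le> Ne" and v: "v = sym_basis k" by blast
  \<comment> \<open>evaluate at the configuration on which only sym_basis k is nonzero\<close>
  let ?S = "hole_conf Ne (\<lambda>x. x < k)"
  have "(\<Sum>w\<in>?B. c w * w ?S) = c v * v ?S + (\<Sum>w\<in>?B - {v}. c w * w ?S)"
    by (rule sum.remove) (use \<open>v \<in> ?B\<close> in auto)
  moreover have "(\<Sum>w\<in>?B. c w * w ?S) = 0"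
    using fun_cong[OF sum0, of ?S] by (simp add: sum_fun_apply)
  moreover have "v ?S = hole_weight Ne" "(\<Sum>w\<in>?B - {v}. c w * w ?S) = 0"
    using sym_basis_initial[OF k] v by (auto intro!: sum.neutral split: if_splits)
  ultimately show "c v = 0" using two_sites hole_weight_nonzero[of Ne] by simp
qed simp

lemma span_sym_basis: "fvec.span (sym_basis ` {..Ne}) = fvec.span (range sym_state)"
proof
  show "fvec.span (sym_basis ` {..Ne}) \<subseteq> fvec.span (range sym_state)"
    by (rule fvec.span_mono) (auto simp: sym_basis_def)
  have "sym_state F \<in> fvec.span (sym_basis ` {..Ne})" for F
    unfolding sym_state_eq_sum_sym_basis[of F] by (intro fvec.span_sum fvec.span_scale fvec.span_base) auto
  then have "range sym_state \<subseteq> fvec.span (sym_basis ` {..Ne})" by blast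
  then show "fvec.span (range sym_state) \<subseteq> fvec.span (sym_basis ` {..Ne})"
    by (rule fvec.span_minimal[OF _ fvec.subspace_span])
qed

lemma cdim_range_sym_state: "cdim (range sym_state) = Ns"
  unfolding cdim_def fvec.dim_eq_card[OF span_sym_basis independent_sym_basis] by (rule card_sym_basis)

end

theorem mainTheorem7:
  fixes Ns :: nat and t U :: real and lam :: "nat \<Rightarrow> real"
  assumes "Ns \<ge> 2" and "t > 0" and "\<forall>x<Ns. lam x > 0" and "U > 0"
  shows "real (cdim (groundSpace Ns (\<lambda>x y. t * lam x * lam y) U (Ns - 1))) = 2 * (real (Ns - 1) / 2) + 1
       \<and> (\<forall>\<psi>\<in>groundSpace Ns (\<lambda>x y. t * lam x * lam y) U (Ns - 1).
            (\<exists>S. \<psi> S \<noteq> 0) \<longrightarrow> hasTotalSpin Ns (real (Ns - 1) / 2) \<psi>)"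
proof -
  interpret rank_one_hubbard Ns lam
    using assms(1,3) by unfold_locales
  have ground: "groundSpace Ns (\<lambda>x y. t * lam x * lam y) U (Ns - 1) = range sym_state"
    using assms(2,4) by (rule groundSpace_eq_range_sym_state)
  have "real (cdim (range sym_state)) = 2 * (real (Ns - 1) / 2) + 1"
    using assms(1) by (simp add: cdim_range_sym_state of_nat_diff field_simps)
  moreover have "hasTotalSpin Ns (real (Ns - 1) / 2) (sym_state F)" for F
    unfolding hasTotalSpin_def by (rule Stot2_sym_state)
  ultimately show ?thesis unfolding ground by auto
qed

end
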